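(* Let $a_0,a_1,\dots,a_k\ge 0$, $\delta>1$ and $m>0$ be real numbers, and let $r=m^{-1/(\delta-1)}$. If $s=\sum_{i=0}^k a_i\ge 1$ and $a_i\le rs$ for all $1\le i\le k$, then $$m\big(a_0+c a_1^\delta+\dots+c a_k^\delta\big)\le c s^\delta$$ for every $c\ge m$. *)

theory Defs
  imports Complex_Main
begin

end

theory Submission
  imports Defs
begin

text \<open>With \<open>t = s powr (\<delta> - 1) \<ge> 1\<close>, the cap \<open>a i \<le> r * s\<close> is exactly what makes
  \<open>m * a i powr (\<delta> - 1) \<le> m * (r * s) powr (\<delta> - 1) = t\<close>, so each term satisfies
  \<open>m * c * a i powr \<delta> \<le> c * t * a i\<close>, while \<open>m * a 0 \<le> c * a 0 \<le> c * t * a 0\<close>.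
  Summing gives the bound \<open>c * t * s = c * s powr \<delta>\<close>.\<close>

lemma powr_root_exponent_inverse:
  fixes m \<delta> :: real
  assumes "m > 0" "\<delta> > 1"
  shows "(m powr (-1 / (\<delta> - 1))) powr (\<delta> - 1) = inverse m"
proof -
  have "(m powr (-1 / (\<delta> - 1))) powr (\<delta> - 1) = m powr (-1)"
    using assms(2) by (simp add: powr_powr)
  then show ?thesis
    using assms(1) by (simp add: powr_minus)
qed

lemma mult_powr_le_of_le_root_scaled:
  fixes m \<delta> x s :: real
  assumes "m > 0" "\<delta> > 1" "x \<ge> 0" "s \<ge> 0"
    and x_le: "x \<le> m powr (-1 / (\<delta> - 1)) * s"
  shows "m * x powr \<delta> \<le> x * s powr (\<delta> - 1)"
proof (cases "x = 0")
  case False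
  with \<open>x \<ge> 0\<close> have "x > 0" by simp
  have "x powr (\<delta> - 1) \<le> (m powr (-1 / (\<delta> - 1)) * s) powr (\<delta> - 1)"
    using \<open>x > 0\<close> \<open>\<delta> > 1\<close> x_le by (intro powr_mono2) auto
  also have "\<dots> = (m powr (-1 / (\<delta> - 1))) powr (\<delta> - 1) * s powr (\<delta> - 1)"
    using \<open>s \<ge> 0\<close> by (auto intro: powr_mult)
  also have "\<dots> = s powr (\<delta> - 1) / m"
    unfolding powr_root_exponent_inverse[OF \<open>m > 0\<close> \<open>\<delta> > 1\<close>] by (simp add: divide_inverse)
  finally have "m * x powr (\<delta> - 1) \<le> s powr (\<delta> - 1)"
    using \<open>m > 0\<close> by (simp add: field_simps)
  then have "x * (m * x powr (\<delta> - 1)) \<le> x * s powr (\<delta> - 1)"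
    using \<open>x > 0\<close> by (simp add: mult_left_mono)
  moreover have "x powr \<delta> = x * x powr (\<delta> - 1)"
    using \<open>x > 0\<close> by (simp add: powr_diff)
  ultimately show ?thesis
    by (simp add: algebra_simps)
qed simp

theorem lemma2p6:
  fixes a :: "nat \<Rightarrow> real" and k :: nat and \<delta> m r s c :: real
  assumes nonneg: "\<And>i. i \<le> k \<Longrightarrow> a i \<ge> 0"
    and delta: "\<delta> > 1" and mpos: "m > 0"
    and r_def: "r = m powr (-1 / (\<delta> - 1))"
    and s_def: "s = (\<Sum>i=0..k. a i)"
    and s_ge: "s \<ge> 1"
    and a_le: "\<And>i. 1 \<le> i \<Longrightarrow> i \<le> k \<Longrightarrow> a i \<le> r * s"
    and c_ge: "c \<ge> m"
  shows "m * (a 0 + (\<Sum>i=1..k. c * a i powr \<delta>)) \<le> c * s powr \<delta>"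
proof -
  define t where "t = s powr (\<delta> - 1)"
  have "t \<ge> 1"
    unfolding t_def using s_ge delta by (simp add: ge_one_powr_ge_zero)
  have head: "m * a 0 \<le> c * (a 0 * t)"
  proof -
    have "m * a 0 \<le> c * a 0"
      using nonneg[of 0] c_ge by (simp add: mult_right_mono)
    also have "\<dots> \<le> c * (a 0 * t)"
      using nonneg[of 0] c_ge mpos \<open>t \<ge> 1\<close> by (simp add: mult_left_mono mult_le_cancel_left1)
    finally show ?thesis .
  qed
  have tail: "m * (c * a i powr \<delta>) \<le> c * (a i * t)" if "1 \<le> i" "i \<le> k" for i
  proof -
    have "m * a i powr \<delta> \<le> a i * t"
      unfolding t_def using mult_powr_le_of_le_root_scaled mpos delta nonneg that s_ge a_le r_def
      by simp
    then show ?thesis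
      using mult_left_mono[of _ _ c] c_ge mpos by (simp add: algebra_simps)
  qed
  have "m * (a 0 + (\<Sum>i=1..k. c * a i powr \<delta>))
      = m * a 0 + (\<Sum>i=1..k. m * (c * a i powr \<delta>))"
    by (simp add: distrib_left sum_distrib_left)
  also have "\<dots> \<le> c * (a 0 * t) + (\<Sum>i=1..k. c * (a i * t))"
    using head tail by (intro add_mono sum_mono) auto
  also have "\<dots> = c * t * (a 0 + (\<Sum>i=1..k. a i))"
    by (simp add: sum_distrib_left algebra_simps)
  also have "a 0 + (\<Sum>i=1..k. a i) = s"
    unfolding s_def by (simp add: sum.atLeast_Suc_atMost)
  also have "c * t * s = c * s powr \<delta>"
    unfolding t_def using s_ge by (simp add: powr_diff)
  finally show ?thesis .
qed

end
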